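(* Fix an integer $q\geq 3$ and let $\gamma\in[0,q-1)$ and $\kappa\in[0,\frac{q-1}{q})$. Then for a small $\epsilon\in(0,1)$ and all sufficiently large $n$, with probability at least $1-q^{-n}$, a random insdel code $\mathcal{C}\subseteq\Sigma_q^n$ of rate $$R=1-(2\gamma-\kappa+1)H_q\!\left(\frac{\gamma}{2\gamma-\kappa+1}\right)+\gamma\log_q(q-1)-H_q(\kappa)-\epsilon$$ is list decodable against $\gamma n$ insertions and $\kappa n$ deletions with list size $O(1/\epsilon)$.
   Context: $\Sigma_q$ is a finite alphabet of size $q$. A code $\mathcal{C}\subseteq\Sigma_q^n$ is list decodable against $\gamma n$ insertions and $\kappa n$ deletions with list size $L$ if for every word $\mathbf r$ (of any length) there are at most $L$ codewords $\mathbf c\in\mathcal{C}$ such that $\mathbf r$ can be obtained from $\mathbf c$ by at most $\gamma n$ single-symbol insertions and at most $\kappa n$ single-symbol deletions. The rate of $\mathcal{C}$ is $\log_q|\mathcal{C}|/n$. A random insdel code of rate $R$ is a subset of $\Sigma_q^n$ of size $q^{Rn}$ chosen uniformly at random. $H_q(x)=x\log_q(q-1)-x\log_q x-(1-x)\log_q(1-x)$ for $0<x<1$, with $H_q(0)=H_q(1)=0$. *)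

theory Defs
  imports Complex_Main
begin

text \<open>Alphabet Sigma_q = {0..<q}; words are lists of naturals.\<close>

definition words :: "nat \<Rightarrow> nat \<Rightarrow> nat list set" where
  "words q n = {w. length w = n \<and> set w \<subseteq> {0..<q}}"

definition Hq :: "nat \<Rightarrow> real \<Rightarrow> real" where
  "Hq q x = (if 0 < x \<and> x < 1 then
      x * log q (real q - 1) - x * log q x - (1 - x) * log q (1 - x) else 0)"

definition one_del :: "'a list \<Rightarrow> 'a list \<Rightarrow> bool" where
  "one_del u v = (\<exists>i < length u. v = take i u @ drop (Suc i) u)"

definition one_ins :: "'a list \<Rightarrow> 'a list \<Rightarrow> bool" where
  "one_ins u v = one_del v u"

inductive insdel :: "nat \<Rightarrow> nat \<Rightarrow> 'a list \<Rightarrow> 'a list \<Rightarrow> bool" where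
  refl: "insdel a b c c"
| ins: "insdel a b c r \<Longrightarrow> one_ins r r' \<Longrightarrow> insdel (Suc a) b c r'"
| del: "insdel a b c r \<Longrightarrow> one_del r r' \<Longrightarrow> insdel a (Suc b) c r'"

definition list_decodable_insdel ::
  "nat \<Rightarrow> nat \<Rightarrow> real \<Rightarrow> real \<Rightarrow> real \<Rightarrow> nat list set \<Rightarrow> bool" where
  "list_decodable_insdel q n \<gamma> \<kappa> L C =
     (\<forall>r. set r \<subseteq> {0..<q} \<longrightarrow>
        real (card {c \<in> C. insdel (nat \<lfloor>\<gamma> * real n\<rfloor>) (nat \<lfloor>\<kappa> * real n\<rfloor>) c r}) \<le> L)"

text \<open>Random code of rate R: uniform over subsets of Sigma_q^n of size floor(q^(R n)).\<close>
definition random_codes :: "nat \<Rightarrow> nat \<Rightarrow> real \<Rightarrow> nat list set set" where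
  "random_codes q n R = {C. C \<subseteq> words q n \<and> card C = nat \<lfloor>real q powr (R * real n)\<rfloor>}"

definition prob_random_code :: "nat \<Rightarrow> nat \<Rightarrow> real \<Rightarrow> (nat list set \<Rightarrow> bool) \<Rightarrow> real" where
  "prob_random_code q n R P =
     real (card {C \<in> random_codes q n R. P C}) / real (card (random_codes q n R))"

definition insdel_rate :: "nat \<Rightarrow> real \<Rightarrow> real \<Rightarrow> real \<Rightarrow> real" where
  "insdel_rate q \<gamma> \<kappa> \<epsilon> =
     1 - (2*\<gamma> - \<kappa> + 1) * Hq q (\<gamma> / (2*\<gamma> - \<kappa> + 1)) + \<gamma> * log q (real q - 1)
       - Hq q \<kappa> - \<epsilon>"

end

theory Submission
  imports Defs "HOL-Library.Sublist" "HOL-Real_Asymp.Real_Asymp"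
begin

text \<open>
  If \<open>r\<close> arises from \<open>c\<close> by at most \<open>a\<close> insertions and \<open>b\<close> deletions, then \<open>c\<close> and \<open>r\<close>
  have a common subsequence \<open>s\<close> with \<open>|c| \<le> |s| + b\<close> and \<open>|r| \<le> |s| + a\<close>. So the ball of
  codewords around \<open>r\<close> is covered by the length-\<open>n\<close> supersequences of the subsequences of \<open>r\<close>.
  There are at most \<open>|r| choose k\<close> subsequences of length \<open>k\<close>, and for every
  \<open>0 < \<sigma> \<le> (q - 1) / q\<close> a word of length \<open>k\<close> has at most \<open>(1 - \<sigma>)^(-k) ((q - 1) / \<sigma>)^(n - k)\<close>
  supersequences of length \<open>n\<close>. Bounding the binomial coefficient with the weights
  \<open>x = \<gamma> / (2\<gamma> - \<kappa> + 1)\<close> and \<open>1 - x\<close>, and taking \<open>\<sigma> = \<kappa>\<close> or \<open>\<sigma> = \<kappa> - \<gamma>\<close>, bounds the ball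
  by \<open>(n + 1) q^(E n)\<close> with \<open>E = (2\<gamma> - \<kappa> + 1) H_q(x) - \<gamma> log_q(q - 1) + H_q(\<kappa>)\<close>; the rate is
  \<open>1 - E - \<epsilon>\<close>.

  A random code with \<open>M\<close> codewords contains a fixed set of \<open>L\<close> words with probability at most
  \<open>(M / q^n)^L\<close>, and \<open>|ball| M / q^n \<le> (n + 1) q^(-\<epsilon> n) \<le> q^(-\<epsilon> n / 2)\<close> for large \<open>n\<close>.
  A union bound over the at most \<open>q^((1 + \<gamma>) n + 1)\<close> received words and the \<open>L\<close>-subsets of
  their balls bounds the failure probability by \<open>q^-n\<close> once \<open>\<epsilon> L \<ge> 2 (\<gamma> + 3)\<close>.
\<close>

section \<open>Insertions, deletions and common subsequences\<close>

lemma one_del_iff: "one_del u v \<longleftrightarrow> (\<exists>xs y ys. u = xs @ y # ys \<and> v = xs @ ys)"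
proof
  assume "one_del u v"
  then obtain i where "i < length u" "v = take i u @ drop (Suc i) u"
    unfolding one_del_def by blast
  then show "\<exists>xs y ys. u = xs @ y # ys \<and> v = xs @ ys"
    by (metis id_take_nth_drop)
next
  assume "\<exists>xs y ys. u = xs @ y # ys \<and> v = xs @ ys"
  then obtain xs y ys where "u = xs @ y # ys" "v = xs @ ys" by blast
  then show "one_del u v"
    unfolding one_del_def by (intro exI[of _ "length xs"]) simp
qed

lemma one_del_subseq: "one_del u v \<Longrightarrow> subseq v u"
  by (auto simp: one_del_iff subseq_append')

lemma one_del_length: "one_del u v \<Longrightarrow> length u = Suc (length v)"
  by (auto simp: one_del_iff)

lemma one_del_common_subseq:
  assumes "subseq s u" "one_del u v"
  obtains s' where "subseq s' s" "subseq s' v" "length s \<le> Suc (length s')"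
proof -
  obtain xs y ys where u: "u = xs @ y # ys" and v: "v = xs @ ys"
    using assms(2) by (auto simp: one_del_iff)
  obtain s1 s2 where s: "s = s1 @ s2" "subseq s1 xs" "subseq s2 (y # ys)"
    using assms(1) unfolding u by (rule subseq_appendE)
  show thesis
  proof (cases "subseq s2 ys")
    case True
    then show thesis using s v by (intro that[of s]) (auto intro: list_emb_append_mono)
  next
    case False
    then obtain s3 where "s2 = y # s3" "subseq s3 ys"
      using s(3) by (cases s2) (auto split: if_splits)
    then show thesis using s v
      by (intro that[of "s1 @ s3"]) (auto intro: list_emb_append_mono)
  qed
qed

lemma insdel_imp_common_subseq:
  assumes "insdel a b c r"
  obtains s where "subseq s c" "subseq s r" "length c \<le> length s + b" "length r \<le> length s + a"
  using assms
proof (induction arbitrary: thesis rule: insdel.induct)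
  case (refl a b c)
  show ?case by (rule refl.prems[of c]) simp_all
next
  case (ins a b c r r')
  obtain s where s: "subseq s c" "subseq s r" "length c \<le> length s + b" "length r \<le> length s + a"
    using ins.IH by blast
  have "subseq r r'" "length r' = Suc (length r)"
    using ins.hyps(2) by (simp_all add: one_ins_def one_del_subseq one_del_length)
  then show ?case using s by (intro ins.prems[of s]) (auto intro: subseq_order.trans)
next
  case (del a b c r r')
  obtain s where s: "subseq s c" "subseq s r" "length c \<le> length s + b" "length r \<le> length s + a"
    using del.IH by blast
  obtain s' where s': "subseq s' s" "subseq s' r'" "length s \<le> Suc (length s')"
    using one_del_common_subseq[OF s(2) del.hyps(2)] .
  have "length r = Suc (length r')"
    using del.hyps(2) by (rule one_del_length)
  then show ?case using s s' by (intro del.prems[of s']) (auto intro: subseq_order.trans)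
qed

lemma nths_inter_lessThan: "nths xs (I \<inter> {..<length xs}) = nths xs I"
proof (induction xs arbitrary: I)
  case (Cons x xs)
  have "{j. Suc j \<in> I \<inter> {..<length (x # xs)}} = {j. Suc j \<in> I} \<inter> {..<length xs}" by auto
  then show ?case using Cons.IH by (simp add: nths_Cons)
qed simp

lemma finite_subseqs: "finite {s. subseq s r}"
  by (simp flip: set_subseqs_eq)

lemma card_subseqs_length_le: "card {s. subseq s r \<and> length s = k} \<le> length r choose k"
proof -
  have "{s. subseq s r \<and> length s = k} \<subseteq> nths r ` {N. N \<subseteq> {..<length r} \<and> card N = k}"
  proof
    fix s assume "s \<in> {s. subseq s r \<and> length s = k}"
    then obtain N where s: "s = nths r N" "length s = k"
      by (auto simp: subseq_conv_nths)
    have "nths r (N \<inter> {..<length r}) = nths r N"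
      by (rule nths_inter_lessThan)
    moreover have "card (N \<inter> {..<length r}) = length (nths r N)"
      unfolding length_nths by (rule arg_cong[where f = card]) auto
    ultimately show "s \<in> nths r ` {N. N \<subseteq> {..<length r} \<and> card N = k}"
      using s by (intro image_eqI[of s _ "N \<inter> {..<length r}"]) auto
  qed
  then have "card {s. subseq s r \<and> length s = k} \<le> card {N. N \<subseteq> {..<length r} \<and> card N = k}"
    by (intro surj_card_le) auto
  also have "\<dots> = length r choose k"
    by (simp add: n_subsets)
  finally show ?thesis .
qed

section \<open>Counting supersequences\<close>

lemma finite_words: "finite (words q n)"
  unfolding words_def using finite_lists_length_eq[of "{0..<q}" n] by (simp add: conj_commute)

lemma card_words: "card (words q n) = q ^ n"
  unfolding words_def using card_lists_length_eq[of "{0..<q}" n] by (simp add: conj_commute)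

lemma words_0: "words q 0 = {[]}"
  by (auto simp: words_def)

lemma in_words_Suc_obtain:
  assumes "c \<in> words q (Suc n)"
  obtains b c' where "c = b # c'" "b < q" "c' \<in> words q n"
  using assms by (cases c) (auto simp: words_def)

definition supersequences :: "nat \<Rightarrow> nat \<Rightarrow> nat list \<Rightarrow> nat list set" where
  "supersequences q n s = {c \<in> words q n. subseq s c}"

lemma finite_supersequences: "finite (supersequences q n s)"
  unfolding supersequences_def using finite_words by simp

lemma supersequences_eq_empty: "n < length s \<Longrightarrow> supersequences q n s = {}"
  by (auto simp: supersequences_def words_def dest: list_emb_length)

lemma card_supersequences_same_length:
  "length s = n \<Longrightarrow> card (supersequences q n s) \<le> 1"
  using card_mono[of "{s}" "supersequences q n s"] subseq_same_length
  by (fastforce simp: supersequences_def words_def intro: card_le_Suc0_iff_eq[THEN iffD2])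

lemma card_supersequences_Cons_le:
  assumes "a < q"
  shows "card (supersequences q (Suc n) (a # t))
    \<le> card (supersequences q n t) + (q - 1) * card (supersequences q n (a # t))"
proof -
  let ?A = "supersequences q n t" and ?B = "supersequences q n (a # t)"
  have "supersequences q (Suc n) (a # t) \<subseteq> Cons a ` ?A \<union> (\<lambda>(b, c). b # c) ` (({0..<q} - {a}) \<times> ?B)"
  proof
    fix c assume "c \<in> supersequences q (Suc n) (a # t)"
    then obtain b c' where c: "c = b # c'" "b < q" "c' \<in> words q n" "subseq (a # t) (b # c')"
      by (auto simp: supersequences_def elim: in_words_Suc_obtain)
    show "c \<in> Cons a ` ?A \<union> (\<lambda>(b, c). b # c) ` (({0..<q} - {a}) \<times> ?B)"
    proof (cases "b = a")
      case True
      then show ?thesis using c by (auto simp: supersequences_def)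
    next
      case False
      then have "(b, c') \<in> ({0..<q} - {a}) \<times> ?B" using c by (auto simp: supersequences_def)
      then show ?thesis using c by force
    qed
  qed
  then have "card (supersequences q (Suc n) (a # t))
      \<le> card (Cons a ` ?A \<union> (\<lambda>(b, c). b # c) ` (({0..<q} - {a}) \<times> ?B))"
    by (intro card_mono) (auto simp: finite_supersequences)
  also have "\<dots> \<le> card (Cons a ` ?A) + card ((\<lambda>(b, c). b # c) ` (({0..<q} - {a}) \<times> ?B))"
    by (rule card_Un_le)
  also have "\<dots> \<le> card ?A + card (({0..<q} - {a}) \<times> ?B)"
    by (intro add_mono card_image_le) (auto simp: finite_supersequences)
  also have "\<dots> = card ?A + (q - 1) * card ?B"
    using assms by (simp add: card_cartesian_product)
  finally show ?thesis .
qed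

lemma power_mult_power_step_le:
  fixes \<alpha> \<beta> c :: real
  assumes "0 \<le> \<alpha>" "0 \<le> \<beta>" "\<beta> + c * \<alpha> \<le> \<alpha> * \<beta>" "m < n"
  shows "\<alpha> ^ m * \<beta> ^ (n - m) + c * (\<alpha> ^ Suc m * \<beta> ^ (n - Suc m)) \<le> \<alpha> ^ Suc m * \<beta> ^ (n - m)"
proof -
  define X where "X = \<alpha> ^ m * \<beta> ^ (n - Suc m)"
  have "0 \<le> X" using assms(1,2) by (simp add: X_def)
  have "\<alpha> ^ m * \<beta> ^ (n - m) + c * (\<alpha> ^ Suc m * \<beta> ^ (n - Suc m)) = X * (\<beta> + c * \<alpha>)"
    using assms(4) by (simp add: X_def Suc_diff_Suc[symmetric] algebra_simps)
  also have "\<dots> \<le> X * (\<alpha> * \<beta>)"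
    by (rule mult_left_mono[OF assms(3) \<open>0 \<le> X\<close>])
  also have "\<dots> = \<alpha> ^ Suc m * \<beta> ^ (n - m)"
    using assms(4) by (simp add: X_def Suc_diff_Suc[symmetric] algebra_simps)
  finally show ?thesis .
qed

lemma card_supersequences_le:
  fixes \<alpha> \<beta> :: real
  assumes "1 \<le> \<alpha>" "real q \<le> \<beta>" "\<beta> + (real q - 1) * \<alpha> \<le> \<alpha> * \<beta>" "set s \<subseteq> {0..<q}"
  shows "real (card (supersequences q n s)) \<le> \<alpha> ^ length s * \<beta> ^ (n - length s)"
  using assms(4)
proof (induction n arbitrary: s)
  case 0
  show ?case
  proof (cases s)
    case Nil
    then show ?thesis by (simp add: supersequences_def words_0)
  next
    case (Cons a t)
    then show ?thesis using assms(1) by (simp add: supersequences_eq_empty)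
  qed
next
  case (Suc n)
  show ?case
  proof (cases s)
    case Nil
    have "real q ^ Suc n \<le> \<beta> ^ Suc n"
      by (rule power_mono) (use assms(2) in auto)
    then show ?thesis using Nil by (simp add: supersequences_def card_words)
  next
    case (Cons a t)
    have a: "a < q" and t: "set t \<subseteq> {0..<q}" using Suc.prems Cons by auto
    have "real (card (supersequences q (Suc n) s))
        \<le> real (card (supersequences q n t) + (q - 1) * card (supersequences q n (a # t)))"
      using card_supersequences_Cons_le[OF a] Cons by (simp only: of_nat_le_iff)
    also have "\<dots> = real (card (supersequences q n t)) + (real q - 1) * real (card (supersequences q n (a # t)))"
      using a by (simp add: of_nat_diff)
    also have "\<dots> \<le> \<alpha> ^ Suc (length t) * \<beta> ^ (n - length t)"
    proof (cases "length t < n")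
      case True
      have "real (card (supersequences q n t)) + (real q - 1) * real (card (supersequences q n (a # t)))
          \<le> \<alpha> ^ length t * \<beta> ^ (n - length t) + (real q - 1) * (\<alpha> ^ Suc (length t) * \<beta> ^ (n - Suc (length t)))"
        using Suc.IH[OF t] Suc.IH[of "a # t"] a t by (intro add_mono mult_left_mono) auto
      also have "\<dots> \<le> \<alpha> ^ Suc (length t) * \<beta> ^ (n - length t)"
        using assms(1-3) True by (intro power_mult_power_step_le) auto
      finally show ?thesis .
    next
      case False
      have "real (card (supersequences q n t)) \<le> \<alpha> ^ length t"
        using Suc.IH[OF t] False by simp
      also have "\<dots> \<le> \<alpha> ^ Suc (length t)" using assms(1) by simp
      finally show ?thesis using False by (simp add: supersequences_eq_empty)
    qed
    finally show ?thesis using Cons by simp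
  qed
qed

lemma card_supersequences_le_exp:
  fixes \<sigma> :: real
  assumes "q \<ge> 2" "0 < \<sigma>" "\<sigma> \<le> (real q - 1) / real q" "set s \<subseteq> {0..<q}"
  shows "real (card (supersequences q n s))
    \<le> exp (- real (length s) * ln (1 - \<sigma>) + real (n - length s) * (ln (real q - 1) - ln \<sigma>))"
proof -
  have q: "real q \<ge> 2" using assms(1) by simp
  have "\<sigma> * real q \<le> real q - 1" using assms(3) q by (simp add: field_simps)
  then have \<sigma>: "\<sigma> < 1" using q by (smt (verit) mult_le_cancel_right1)
  define \<alpha> where "\<alpha> = 1 / (1 - \<sigma>)"
  define \<beta> where "\<beta> = (real q - 1) / \<sigma>"
  have "1 \<le> \<alpha>" "real q \<le> \<beta>" "\<beta> + (real q - 1) * \<alpha> \<le> \<alpha> * \<beta>"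
    using assms q \<sigma> by (simp_all add: \<alpha>_def \<beta>_def field_simps)
  then have "real (card (supersequences q n s)) \<le> \<alpha> ^ length s * \<beta> ^ (n - length s)"
    using assms(4) by (rule card_supersequences_le)
  also have "\<dots> = exp (real (length s) * ln \<alpha> + real (n - length s) * ln \<beta>)"
    using \<open>1 \<le> \<alpha>\<close> \<open>real q \<le> \<beta>\<close> q by (simp add: exp_add exp_of_nat_mult)
  also have "\<dots> = exp (- real (length s) * ln (1 - \<sigma>) + real (n - length s) * (ln (real q - 1) - ln \<sigma>))"
    using assms(2) q \<sigma> by (simp add: \<alpha>_def \<beta>_def ln_div)
  finally show ?thesis .
qed

section \<open>Entropy estimates\<close>

lemma binomial_le_exp:
  fixes x :: real
  assumes "0 < x" "x < 1"
  shows "real ((i + j) choose i) \<le> exp (- real i * ln x - real j * ln (1 - x))"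
proof -
  have "real ((i + j) choose i) * x ^ i * (1 - x) ^ (i + j - i)
      \<le> (\<Sum>l\<le>i + j. real ((i + j) choose l) * x ^ l * (1 - x) ^ (i + j - l))"
    using assms by (intro member_le_sum) auto
  also have "\<dots> = 1"
    using binomial_ring[of x "1 - x" "i + j"] by simp
  finally have "real ((i + j) choose i) * exp (real i * ln x + real j * ln (1 - x)) \<le> 1"
    using assms by (simp add: exp_add exp_of_nat_mult mult.assoc)
  then have "real ((i + j) choose i) \<le> inverse (exp (real i * ln x + real j * ln (1 - x)))"
    by (simp add: field_simps)
  also have "\<dots> = exp (- real i * ln x - real j * ln (1 - x))"
    by (simp add: exp_minus[symmetric] algebra_simps)
  finally show ?thesis .
qed

lemma binary_entropy_le_cross_entropy:
  fixes e k :: real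
  assumes "0 < e" "e < 1" "0 < k" "k < 1"
  shows "- e * ln e - (1 - e) * ln (1 - e) \<le> - e * ln k - (1 - e) * ln (1 - k)"
proof -
  have "ln (k / e) \<le> k / e - 1" "ln ((1 - k) / (1 - e)) \<le> (1 - k) / (1 - e) - 1"
    using assms by (intro ln_le_minus_one; simp)+
  then have "e * (ln k - ln e) \<le> k - e" "(1 - e) * (ln (1 - k) - ln (1 - e)) \<le> e - k"
    using assms by (simp_all add: ln_div field_simps)
  then show ?thesis by (simp add: algebra_simps)
qed

text \<open>The coefficient of the number of deletions in the exponent of the combined bound; being
  nonnegative, the worst case is the largest admissible number of deletions.\<close>

lemma deletion_coefficient_nonneg:
  fixes e \<gamma> :: real
  assumes "q \<ge> 2" "0 \<le> \<gamma>" "0 < e" "e + \<gamma> \<le> (real q - 1) / real q"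
  shows "0 \<le> ln (real q - 1) - ln e + ln ((1 - e) / (1 - e + \<gamma>)) + ln (1 - e)"
proof -
  have q: "real q \<ge> 2" using assms(1) by simp
  have eq: "(e + \<gamma>) * real q \<le> real q - 1" using assms(4) q by (simp add: field_simps)
  then have e1: "e < 1" using assms(2,3) q by (smt (verit) mult_le_cancel_right1)
  have "0 \<le> \<gamma> * real q" using assms(2) by simp
  then have "e * real q \<le> real q - 1" using eq by (simp add: algebra_simps)
  then have "e \<le> (1 - e) * real q" using e1 by (simp add: algebra_simps)
  then have "e * \<gamma> \<le> (1 - e) * real q * \<gamma>" using assms(2) by (rule mult_right_mono)
  also have "\<dots> \<le> (1 - e) * (real q - 1 - real q * e)"
    unfolding mult.assoc using eq e1 by (intro mult_left_mono) (auto simp: algebra_simps)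
  finally have "e * (1 - e + \<gamma>) \<le> (real q - 1) * (1 - e) * (1 - e)"
    by (simp add: algebra_simps)
  then have "e \<le> (real q - 1) * ((1 - e) / (1 - e + \<gamma>)) * (1 - e)"
    using e1 assms(2) by (simp add: field_simps)
  then have "ln e \<le> ln ((real q - 1) * ((1 - e) / (1 - e + \<gamma>)) * (1 - e))"
    using assms(3) by (rule ln_mono)
  also have "\<dots> = ln (real q - 1) + ln ((1 - e) / (1 - e + \<gamma>)) + ln (1 - e)"
  proof -
    have "0 < real q - 1" "0 < (1 - e) / (1 - e + \<gamma>)" "0 < 1 - e"
      using q e1 assms(2) by simp_all
    then show ?thesis by (simp only: ln_mult) auto
  qed
  finally show ?thesis by simp
qed

lemma ln_mult_Hq:
  assumes "q \<ge> 2" "0 < y" "y < 1"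
  shows "ln q * Hq q y = y * ln (real q - 1) - y * ln y - (1 - y) * ln (1 - y)"
  using assms by (simp add: Hq_def log_def field_simps)

lemma Hq_nonneg:
  assumes "q \<ge> 2"
  shows "0 \<le> Hq q y"
proof (cases "0 < y \<and> y < 1")
  case True
  have "0 \<le> y * ln (real q - 1)" "y * ln y \<le> 0" "(1 - y) * ln (1 - y) \<le> 0"
    using True assms by (simp_all add: mult_nonneg_nonpos)
  then have "0 \<le> y * ln (real q - 1) - y * ln y - (1 - y) * ln (1 - y)"
    by linarith
  then have "0 \<le> ln q * Hq q y"
    using ln_mult_Hq[OF assms] True by simp
  moreover have "0 < ln (real q)" using assms by simp
  ultimately show ?thesis by (simp add: zero_le_mult_iff)
qed (auto simp: Hq_def)

definition ins_exponent :: "nat \<Rightarrow> real \<Rightarrow> real \<Rightarrow> real" where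
  "ins_exponent q \<gamma> \<kappa> = ln q * ((2*\<gamma> - \<kappa> + 1) * Hq q (\<gamma> / (2*\<gamma> - \<kappa> + 1)) - \<gamma> * log q (real q - 1))"

definition del_exponent :: "nat \<Rightarrow> real \<Rightarrow> real" where
  "del_exponent q \<kappa> = ln q * Hq q \<kappa>"

lemma ln_insdel_rate:
  "ln q * insdel_rate q \<gamma> \<kappa> \<epsilon> = ln q - ins_exponent q \<gamma> \<kappa> - del_exponent q \<kappa> - \<epsilon> * ln q"
  by (simp add: insdel_rate_def ins_exponent_def del_exponent_def algebra_simps)

lemma ins_exponent_0 [simp]: "ins_exponent q 0 \<kappa> = 0"
  by (simp add: ins_exponent_def Hq_def)

lemma del_exponent_0 [simp]: "del_exponent q 0 = 0"
  by (simp add: del_exponent_def Hq_def)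

lemma ins_exponent_eq:
  assumes "q \<ge> 2" "0 < \<gamma>" "\<kappa> < 1"
  shows "ins_exponent q \<gamma> \<kappa>
    = - \<gamma> * ln (\<gamma> / (2*\<gamma> - \<kappa> + 1)) - (1 + \<gamma> - \<kappa>) * ln (1 - \<gamma> / (2*\<gamma> - \<kappa> + 1))"
proof -
  define m where "m = 2*\<gamma> - \<kappa> + 1"
  define x where "x = \<gamma> / m"
  have m: "m > 0" and x: "0 < x" "x < 1" "m * x = \<gamma>" "m * (1 - x) = 1 + \<gamma> - \<kappa>"
    using assms by (auto simp: m_def x_def field_simps)
  have "ins_exponent q \<gamma> \<kappa> = m * (ln q * Hq q x) - \<gamma> * ln (real q - 1)"
    using assms by (simp add: ins_exponent_def m_def x_def log_def field_simps)
  also have "\<dots> = m * (x * ln (real q - 1) - x * ln x - (1 - x) * ln (1 - x)) - \<gamma> * ln (real q - 1)"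
    using assms(1) x by (simp only: ln_mult_Hq)
  also have "\<dots> = - (m * x) * ln x - (m * (1 - x)) * ln (1 - x)"
    by (simp add: algebra_simps flip: x(3))
  finally show ?thesis
    using x by (simp add: m_def x_def)
qed

lemma del_exponent_eq:
  assumes "q \<ge> 2" "0 < \<kappa>" "\<kappa> < 1"
  shows "del_exponent q \<kappa> = \<kappa> * ln (real q - 1) - \<kappa> * ln \<kappa> - (1 - \<kappa>) * ln (1 - \<kappa>)"
  using ln_mult_Hq[OF assms] by (simp add: del_exponent_def)

lemma ins_exponent_nonneg:
  assumes "q \<ge> 2" "0 \<le> \<gamma>" "\<kappa> < 1"
  shows "0 \<le> ins_exponent q \<gamma> \<kappa>"
proof (cases "\<gamma> = 0")
  case False
  define x where "x = \<gamma> / (2*\<gamma> - \<kappa> + 1)"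
  have "0 < x" "x < 1" using assms False by (auto simp: x_def field_simps)
  then have "\<gamma> * ln x \<le> 0" "(1 + \<gamma> - \<kappa>) * ln (1 - x) \<le> 0"
    using assms by (simp_all add: mult_nonneg_nonpos)
  then have "0 \<le> - \<gamma> * ln x - (1 + \<gamma> - \<kappa>) * ln (1 - x)"
    by linarith
  then show ?thesis
    using ins_exponent_eq[OF assms(1) _ assms(3)] assms(2) False by (simp add: x_def)
qed simp

lemma del_exponent_nonneg: "q \<ge> 2 \<Longrightarrow> 0 \<le> del_exponent q \<kappa>"
  using Hq_nonneg[of q \<kappa>] by (simp add: del_exponent_def)

section \<open>The size of an insdel ball\<close>

lemma binomial_le_exp_ins_exponent:
  assumes "q \<ge> 2" "0 < \<gamma>" "\<kappa> < 1" "real i \<le> \<gamma> * real n" "real k \<le> (1 + \<gamma> - \<kappa>) * real n"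
  shows "real ((i + k) choose i) \<le> exp (real n * ins_exponent q \<gamma> \<kappa>)"
proof -
  define x where "x = \<gamma> / (2*\<gamma> - \<kappa> + 1)"
  have x: "0 < x" "x < 1" using assms(2,3) by (auto simp: x_def field_simps)
  have "real ((i + k) choose i) \<le> exp (real i * (- ln x) + real k * (- ln (1 - x)))"
    using binomial_le_exp[OF x] by simp
  also have "\<dots> \<le> exp ((\<gamma> * real n) * (- ln x) + ((1 + \<gamma> - \<kappa>) * real n) * (- ln (1 - x)))"
  proof -
    have "real i * (- ln x) \<le> (\<gamma> * real n) * (- ln x)"
      "real k * (- ln (1 - x)) \<le> ((1 + \<gamma> - \<kappa>) * real n) * (- ln (1 - x))"
      using assms(4,5) x by (intro mult_right_mono; simp)+
    then show ?thesis by simp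
  qed
  also have "\<dots> = exp (real n * ins_exponent q \<gamma> \<kappa>)"
    unfolding ins_exponent_eq[OF assms(1-3)] x_def by (simp add: algebra_simps)
  finally show ?thesis .
qed

lemma card_supersequences_le_exp_del_exponent:
  assumes "q \<ge> 2" "0 \<le> \<kappa>" "\<kappa> \<le> (real q - 1) / real q" "set s \<subseteq> {0..<q}"
    and "length s \<le> n" "real (n - length s) \<le> \<kappa> * real n"
  shows "real (card (supersequences q n s)) \<le> exp (real n * del_exponent q \<kappa>)"
proof (cases "\<kappa> = 0")
  case True
  then show ?thesis
    using assms(5,6) card_supersequences_same_length[of s n q] by simp
next
  case False
  define k where "k = real (length s)"
  define D where "D = real (n - length s)"
  define c where "c = ln (real q - 1) - ln \<kappa> + ln (1 - \<kappa>)"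
  have "(real q - 1) / real q < 1" using assms(1) by simp
  then have \<kappa>: "0 < \<kappa>" "\<kappa> < 1"
    using False assms(2,3) by auto
  have "0 \<le> c"
    using deletion_coefficient_nonneg[of q 0 \<kappa>] assms(1,3) \<kappa> by (simp add: c_def)
  then have "D * c \<le> (\<kappa> * real n) * c"
    using assms(6) by (simp add: D_def mult_right_mono)
  have k: "k = real n - D"
    using assms(5) by (simp add: k_def D_def of_nat_diff)
  have "- k * ln (1 - \<kappa>) + D * (ln (real q - 1) - ln \<kappa>) = - real n * ln (1 - \<kappa>) + D * c"
    unfolding k c_def by (simp add: algebra_simps)
  also have "\<dots> \<le> - real n * ln (1 - \<kappa>) + (\<kappa> * real n) * c"
    using \<open>D * c \<le> (\<kappa> * real n) * c\<close> by simp
  also have "\<dots> = real n * del_exponent q \<kappa>"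
    unfolding del_exponent_eq[OF assms(1) \<kappa>] c_def by (simp add: algebra_simps)
  finally have "- k * ln (1 - \<kappa>) + D * (ln (real q - 1) - ln \<kappa>) \<le> real n * del_exponent q \<kappa>" .
  then show ?thesis
    using card_supersequences_le_exp[OF assms(1) \<kappa>(1) assms(3,4), of n]
    unfolding k_def D_def by (meson exp_le_cancel_iff order_trans)
qed

text \<open>If the common subsequence is longer than \<open>(1 + \<gamma> - \<kappa>) n\<close>, the binomial factor exceeds its
  share \<open>ins_exponent\<close> of the exponent. The supersequence bound with \<open>\<sigma> = \<kappa> - \<gamma>\<close> instead of
  \<open>\<sigma> = \<kappa>\<close> makes up for it, by Gibbs' inequality.\<close>

lemma long_common_subseq_exponent_le:
  fixes i k n \<gamma> \<kappa> :: real
  defines "x \<equiv> \<gamma> / (2*\<gamma> - \<kappa> + 1)" and "e \<equiv> \<kappa> - \<gamma>"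
  assumes q: "q \<ge> 2" and "0 < \<gamma>" "\<kappa> \<le> (real q - 1) / real q"
    and "i \<le> \<gamma> * n" "0 \<le> k" "0 \<le> n - k" "n - k < e * n"
  shows "i * (- ln x) + k * (- ln (1 - x)) - k * ln (1 - e) + (n - k) * (ln (real q - 1) - ln e)
    \<le> n * (ins_exponent q \<gamma> \<kappa> + del_exponent q \<kappa>)"
proof -
  define c where "c = ln (real q - 1) - ln \<kappa> + ln (1 - \<kappa>)"
  define c' where "c' = ln (real q - 1) - ln e + ln (1 - x) + ln (1 - e)"
  have "(real q - 1) / real q < 1" using q by simp
  then have \<kappa>1: "\<kappa> < 1" using assms(5) by linarith
  have "0 < e * n" "0 \<le> n" using assms(7-9) by linarith+
  then have e: "0 < e" by (simp add: zero_less_mult_iff)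
  have \<kappa>: "0 < \<kappa>" "e < \<kappa>" using e assms(4) by (auto simp: e_def)
  have x: "0 < x" "x < 1" "1 - x = (1 - e) / (1 - e + \<gamma>)"
    using assms(4) \<kappa>1 by (auto simp: x_def e_def field_simps)
  have "0 \<le> c'"
    using deletion_coefficient_nonneg[of q \<gamma> e] q assms(4,5) e by (simp add: c'_def e_def x(3))
  moreover have "0 \<le> c"
    using deletion_coefficient_nonneg[of q 0 \<kappa>] q assms(5) \<kappa> \<kappa>1 by (simp add: c_def)
  ultimately have "i * (- ln x) \<le> (\<gamma> * n) * (- ln x)" "(n - k) * c' \<le> (e * n) * c'"
    "(e * n) * c \<le> (\<kappa> * n) * c"
    using assms(6,8,9) x \<kappa> \<open>0 \<le> n\<close> by (intro mult_right_mono; simp)+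
  moreover have "n * (- e * ln e - (1 - e) * ln (1 - e)) \<le> n * (- e * ln \<kappa> - (1 - e) * ln (1 - \<kappa>))"
    using binary_entropy_le_cross_entropy[of e \<kappa>] e \<kappa> \<kappa>1 \<open>0 \<le> n\<close> by (intro mult_left_mono) auto
  ultimately have "i * (- ln x) + k * (- ln (1 - x)) - k * ln (1 - e) + (n - k) * (ln (real q - 1) - ln e)
      \<le> (\<gamma> * n) * (- ln x) + ((1 - e) * n) * (- ln (1 - x)) - n * ln (1 - \<kappa>) + (\<kappa> * n) * c"
    unfolding c'_def c_def by (simp add: algebra_simps)
  also have "\<dots> = n * (ins_exponent q \<gamma> \<kappa> + del_exponent q \<kappa>)"
    unfolding ins_exponent_eq[OF q assms(4) \<kappa>1] del_exponent_eq[OF q \<kappa>(1) \<kappa>1] x_def c_def e_def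
    by (simp add: algebra_simps)
  finally show ?thesis .
qed

lemma binomial_mult_card_supersequences_le_long:
  assumes "q \<ge> 2" "0 < \<gamma>" "\<kappa> \<le> (real q - 1) / real q" "real i \<le> \<gamma> * real n"
    and "(1 + \<gamma> - \<kappa>) * real n < real k" "k \<le> n" "length s = k" "set s \<subseteq> {0..<q}"
  shows "real ((i + k) choose i) * real (card (supersequences q n s))
    \<le> exp (real n * (ins_exponent q \<gamma> \<kappa> + del_exponent q \<kappa>))"
proof -
  define e where "e = \<kappa> - \<gamma>"
  define x where "x = \<gamma> / (2*\<gamma> - \<kappa> + 1)"
  have "(real q - 1) / real q < 1" using assms(1) by simp
  then have \<kappa>1: "\<kappa> < 1" using assms(3) by linarith
  have D: "0 \<le> real n - real k" "real n - real k < e * real n"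
    using assms(5,6) by (auto simp: e_def algebra_simps)
  then have "0 < e * real n" by linarith
  then have e: "0 < e" "e \<le> (real q - 1) / real q"
    using assms(2,3) by (auto simp: e_def zero_less_mult_iff)
  have x: "0 < x" "x < 1"
    using assms(2) \<kappa>1 by (auto simp: x_def field_simps)
  have "real ((i + k) choose i) \<le> exp (real i * (- ln x) + real k * (- ln (1 - x)))"
    using binomial_le_exp[OF x] by simp
  moreover have "real (card (supersequences q n s))
      \<le> exp (- real k * ln (1 - e) + (real n - real k) * (ln (real q - 1) - ln e))"
    using card_supersequences_le_exp[OF assms(1) e assms(8), of n] assms(6,7) by (simp add: of_nat_diff)
  ultimately have "real ((i + k) choose i) * real (card (supersequences q n s))
      \<le> exp (real i * (- ln x) + real k * (- ln (1 - x)))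
        * exp (- real k * ln (1 - e) + (real n - real k) * (ln (real q - 1) - ln e))"
    by (intro mult_mono) simp_all
  also have "\<dots> \<le> exp (real n * (ins_exponent q \<gamma> \<kappa> + del_exponent q \<kappa>))"
    unfolding exp_add[symmetric] exp_le_cancel_iff
    using long_common_subseq_exponent_le[OF assms(1-4), of "real k"] D by (simp add: x_def e_def)
  finally show ?thesis .
qed

lemma binomial_mult_card_supersequences_le:
  assumes "q \<ge> 2" "0 \<le> \<gamma>" "0 \<le> \<kappa>" "\<kappa> \<le> (real q - 1) / real q"
    and "real i \<le> \<gamma> * real n" "real (n - k) \<le> \<kappa> * real n" "k \<le> n" "length s = k" "set s \<subseteq> {0..<q}"
  shows "real ((i + k) choose i) * real (card (supersequences q n s))
    \<le> exp (real n * (ins_exponent q \<gamma> \<kappa> + del_exponent q \<kappa>))"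
proof -
  have "(real q - 1) / real q < 1" using assms(1) by simp
  then have \<kappa>1: "\<kappa> < 1" using assms(4) by linarith
  have card_le: "real (card (supersequences q n s)) \<le> exp (real n * del_exponent q \<kappa>)"
    using card_supersequences_le_exp_del_exponent[OF assms(1,3,4,9)] assms(6-8) by simp
  consider "\<gamma> = 0" | "0 < \<gamma>" "real k \<le> (1 + \<gamma> - \<kappa>) * real n" | "0 < \<gamma>" "(1 + \<gamma> - \<kappa>) * real n < real k"
    using assms(2) by linarith
  then show ?thesis
  proof cases
    case 1
    then show ?thesis using assms(5) card_le by simp
  next
    case 2
    then have "real ((i + k) choose i) \<le> exp (real n * ins_exponent q \<gamma> \<kappa>)"
      using binomial_le_exp_ins_exponent[OF assms(1) _ \<kappa>1 assms(5)] by simp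
    then have "real ((i + k) choose i) * real (card (supersequences q n s))
        \<le> exp (real n * ins_exponent q \<gamma> \<kappa>) * exp (real n * del_exponent q \<kappa>)"
      using card_le by (intro mult_mono) auto
    then show ?thesis by (simp add: distrib_left exp_add)
  next
    case 3
    then show ?thesis
      using binomial_mult_card_supersequences_le_long[OF assms(1) _ assms(4,5) _ assms(7-9)] by simp
  qed
qed

lemma sum_card_supersequences_le:
  assumes "q \<ge> 2" "0 \<le> \<gamma>" "0 \<le> \<kappa>" "\<kappa> \<le> (real q - 1) / real q" "set r \<subseteq> {0..<q}"
    and "k \<le> n" "k \<le> length r" "real (length r - k) \<le> \<gamma> * real n" "real (n - k) \<le> \<kappa> * real n"
  shows "(\<Sum>s | subseq s r \<and> length s = k. real (card (supersequences q n s)))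
    \<le> exp (real n * (ins_exponent q \<gamma> \<kappa> + del_exponent q \<kappa>))"
proof -
  define Z where "Z = exp (real n * (ins_exponent q \<gamma> \<kappa> + del_exponent q \<kappa>))"
  define C where "C = real (length r choose k)"
  have C: "0 < C" "C = real ((length r - k + k) choose (length r - k))"
    using assms(7) binomial_symmetric[OF assms(7)] by (simp_all add: C_def)
  have "real (card (supersequences q n s)) \<le> Z / C" if "subseq s r" "length s = k" for s
  proof -
    have "set s \<subseteq> {0..<q}"
      using that(1) assms(5) set_nths_subset[of r] by (force simp: subseq_conv_nths)
    then have "C * real (card (supersequences q n s)) \<le> Z"
      using binomial_mult_card_supersequences_le[OF assms(1-4,8,9,6)] that C(2) by (simp add: Z_def)
    then show ?thesis using C(1) by (simp add: field_simps)
  qed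
  then have "(\<Sum>s | subseq s r \<and> length s = k. real (card (supersequences q n s)))
      \<le> (\<Sum>s | subseq s r \<and> length s = k. Z / C)"
    by (intro sum_mono) auto
  also have "\<dots> = real (card {s. subseq s r \<and> length s = k}) * (Z / C)"
    by simp
  also have "\<dots> \<le> C * (Z / C)"
    using card_subseqs_length_le[of r k] C(1) by (intro mult_right_mono) (simp_all add: C_def Z_def)
  finally show ?thesis
    using C(1) by (simp add: Z_def)
qed

definition insdel_ball :: "nat \<Rightarrow> nat \<Rightarrow> nat \<Rightarrow> nat \<Rightarrow> nat list \<Rightarrow> nat list set" where
  "insdel_ball q n a b r = {c \<in> words q n. insdel a b c r}"

lemma card_insdel_ball_le:
  assumes "q \<ge> 2" "0 \<le> \<gamma>" "0 \<le> \<kappa>" "\<kappa> \<le> (real q - 1) / real q"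
    and "real a \<le> \<gamma> * real n" "real b \<le> \<kappa> * real n" "set r \<subseteq> {0..<q}"
  shows "real (card (insdel_ball q n a b r))
    \<le> (real n + 1) * exp (real n * (ins_exponent q \<gamma> \<kappa> + del_exponent q \<kappa>))"
proof -
  define K where "K = {k. k \<le> n \<and> k \<le> length r \<and> length r - k \<le> a \<and> n - k \<le> b}"
  define S where "S k = {s. subseq s r \<and> length s = k}" for k
  have fin: "finite K" "finite (S k)" for k
    using finite_subset[OF _ finite_subseqs[of r]] unfolding K_def S_def by auto
  have "insdel_ball q n a b r \<subseteq> (\<Union>k\<in>K. \<Union>s\<in>S k. supersequences q n s)"
  proof
    fix c assume "c \<in> insdel_ball q n a b r"
    then have c: "c \<in> words q n" "insdel a b c r" by (auto simp: insdel_ball_def)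
    then obtain s where s: "subseq s c" "subseq s r" "length c \<le> length s + b" "length r \<le> length s + a"
      using insdel_imp_common_subseq by blast
    have "length c = n" using c by (simp add: words_def)
    then have "length s \<in> K" "s \<in> S (length s)" "c \<in> supersequences q n s"
      using s c list_emb_length[OF s(1)] list_emb_length[OF s(2)]
      by (auto simp: K_def S_def supersequences_def)
    then show "c \<in> (\<Union>k\<in>K. \<Union>s\<in>S k. supersequences q n s)" by blast
  qed
  then have "card (insdel_ball q n a b r) \<le> card (\<Union>k\<in>K. \<Union>s\<in>S k. supersequences q n s)"
    using fin by (intro card_mono) (auto simp: finite_supersequences)
  also have "\<dots> \<le> (\<Sum>k\<in>K. \<Sum>s\<in>S k. card (supersequences q n s))"
    using fin by (intro order.trans[OF card_UN_le] sum_mono card_UN_le) auto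
  finally have "real (card (insdel_ball q n a b r)) \<le> (\<Sum>k\<in>K. \<Sum>s\<in>S k. real (card (supersequences q n s)))"
    by (simp flip: of_nat_sum)
  also have "\<dots> \<le> (\<Sum>k\<in>K. exp (real n * (ins_exponent q \<gamma> \<kappa> + del_exponent q \<kappa>)))"
    using sum_card_supersequences_le[OF assms(1-4,7)] assms(5,6)
    by (intro sum_mono) (auto simp: K_def S_def)
  also have "\<dots> \<le> (real n + 1) * exp (real n * (ins_exponent q \<gamma> \<kappa> + del_exponent q \<kappa>))"
  proof -
    have "card K \<le> card {..n}" by (intro card_mono) (auto simp: K_def)
    then show ?thesis by simp
  qed
  finally show ?thesis .
qed

section \<open>Random codes\<close>

lemma choose_le_power: "n choose k \<le> n ^ k"
  by (cases "k \<le> n") (simp_all add: binomial_le_pow binomial_eq_0)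

lemma binomial_diff_mult_power_le:
  assumes "j \<le> M" "M \<le> Q"
  shows "real ((Q - j) choose (M - j)) * real Q ^ j \<le> real (Q choose M) * real M ^ j"
  using assms(1)
proof (induction j)
  case (Suc j)
  define B where "B = real ((Q - j) choose (M - j))"
  define B' where "B' = real ((Q - Suc j) choose (M - Suc j))"
  have j: "j < M" "j < Q" using Suc.prems assms(2) by auto
  have "(M - j) * ((Q - j) choose (M - j)) = (Q - j) * ((Q - Suc j) choose (M - Suc j))"
    using binomial_absorption[of "M - Suc j" "Q - j"] j(1) by (simp add: Suc_diff_Suc)
  then have "real (Q - j) * B' = real (M - j) * B"
    unfolding B_def B'_def by (metis of_nat_mult)
  then have "real (Q - j) * (B' * real Q) = B * (real (M - j) * real Q)"
    by (simp add: algebra_simps)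
  also have "\<dots> \<le> B * (real M * real (Q - j))"
  proof (rule mult_left_mono)
    show "real (M - j) * real Q \<le> real M * real (Q - j)"
      using j assms(2) by (simp add: of_nat_diff algebra_simps mult_right_mono)
  qed (simp add: B_def)
  finally have "real (Q - j) * (B' * real Q) \<le> real (Q - j) * (B * real M)"
    by (simp add: algebra_simps)
  then have "B' * real Q \<le> B * real M"
    by (rule mult_left_le_imp_le) (use j(2) in simp)
  then have "B' * real Q ^ Suc j \<le> real M * (B * real Q ^ j)"
    using mult_right_mono[of "B' * real Q" "B * real M" "real Q ^ j"] by (simp add: algebra_simps)
  also have "\<dots> \<le> real M * (real (Q choose M) * real M ^ j)"
    using Suc.IH j(1) by (intro mult_left_mono) (simp_all add: B_def)
  finally show ?case by (simp add: B'_def algebra_simps)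
qed simp

lemma card_subsets_containing_le:
  fixes W T :: "'a set"
  assumes "finite W" "T \<subseteq> W" "M \<le> card W"
  shows "real (card {C. C \<subseteq> W \<and> card C = M \<and> T \<subseteq> C})
    \<le> real (card W choose M) * (real M / real (card W)) ^ card T"
proof (cases "card T \<le> M")
  case True
  have T: "finite T" using assms(1,2) finite_subset by blast
  have "bij_betw (\<lambda>C. C - T) {C. C \<subseteq> W \<and> card C = M \<and> T \<subseteq> C} {B. B \<subseteq> W - T \<and> card B = M - card T}"
  proof (rule bij_betw_byWitness[where f' = "\<lambda>B. B \<union> T"])
    show "(\<lambda>B. B \<union> T) ` {B. B \<subseteq> W - T \<and> card B = M - card T} \<subseteq> {C. C \<subseteq> W \<and> card C = M \<and> T \<subseteq> C}"
    proof
      fix C assume "C \<in> (\<lambda>B. B \<union> T) ` {B. B \<subseteq> W - T \<and> card B = M - card T}"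
      then obtain B where B: "B \<subseteq> W - T" "card B = M - card T" "C = B \<union> T" by auto
      have "finite B" "B \<inter> T = {}"
        using B(1) assms(1) finite_subset by auto
      then have "card C = M" using B T True by (simp add: card_Un_disjoint)
      then show "C \<in> {C. C \<subseteq> W \<and> card C = M \<and> T \<subseteq> C}" using B assms(2) by auto
    qed
  qed (use T in \<open>auto simp: card_Diff_subset\<close>)
  then have "card {C. C \<subseteq> W \<and> card C = M \<and> T \<subseteq> C} = (card W - card T) choose (M - card T)"
    using assms(1,2) T by (simp add: bij_betw_same_card n_subsets card_Diff_subset)
  moreover have "real ((card W - card T) choose (M - card T)) * real (card W) ^ card T
      \<le> real (card W choose M) * real M ^ card T"
    using True assms(3) by (rule binomial_diff_mult_power_le)
  ultimately show ?thesis
    using assms(3) True by (cases "card W = 0") (simp_all add: field_simps power_divide)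
next
  case False
  have "card T \<le> card C" if "C \<subseteq> W" "T \<subseteq> C" for C
    using that assms(1) by (meson card_mono finite_subset)
  then have empty: "{C. C \<subseteq> W \<and> card C = M \<and> T \<subseteq> C} = {}"
    using False by force
  show ?thesis by (simp only: empty card.empty) simp
qed

lemma sum_card_subsets_containing_le:
  fixes W B :: "'a set"
  assumes "finite W" "B \<subseteq> W" "M \<le> card W"
  shows "(\<Sum>T | T \<subseteq> B \<and> card T = L. real (card {C. C \<subseteq> W \<and> card C = M \<and> T \<subseteq> C}))
    \<le> (real (card B) * real M / real (card W)) ^ L * real (card W choose M)"
proof -
  define p where "p = real M / real (card W)"
  have "finite B" using assms(1,2) finite_subset by blast
  have "(\<Sum>T | T \<subseteq> B \<and> card T = L. real (card {C. C \<subseteq> W \<and> card C = M \<and> T \<subseteq> C}))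
      \<le> (\<Sum>T | T \<subseteq> B \<and> card T = L. real (card W choose M) * p ^ L)"
    using card_subsets_containing_le[OF assms(1) _ assms(3)] assms(2)
    by (intro sum_mono) (auto simp: p_def)
  also have "\<dots> = real (card B choose L) * (real (card W choose M) * p ^ L)"
    using \<open>finite B\<close> by (simp add: n_subsets)
  also have "\<dots> \<le> real (card B) ^ L * (real (card W choose M) * p ^ L)"
    using choose_le_power[of "card B" L] by (intro mult_right_mono) (simp_all add: p_def flip: of_nat_power)
  also have "\<dots> = (real (card B) * p) ^ L * real (card W choose M)"
    by (simp add: power_mult_distrib)
  also have "real (card B) * p = real (card B) * real M / real (card W)"
    by (simp add: p_def)
  finally show ?thesis .
qed

lemma card_subsets_meeting_some_le:
  fixes W :: "'a set" and B :: "'b \<Rightarrow> 'a set"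
  assumes "finite W" "finite I" "M \<le> card W" "\<And>i. i \<in> I \<Longrightarrow> B i \<subseteq> W"
    and "\<And>i. i \<in> I \<Longrightarrow> real (card (B i)) * real M / real (card W) \<le> \<rho>"
  shows "real (card {C. C \<subseteq> W \<and> card C = M \<and> (\<exists>i\<in>I. L \<le> card (C \<inter> B i))})
    \<le> real (card I) * \<rho> ^ L * real (card W choose M)"
proof -
  define Ts where "Ts i = {T. T \<subseteq> B i \<and> card T = L}" for i
  define Cs where "Cs T = {C. C \<subseteq> W \<and> card C = M \<and> T \<subseteq> C}" for T
  have fin: "finite (Ts i)" "finite (Cs T)" if "i \<in> I" for i T
  proof -
    have "finite (B i)" using assms(1) assms(4)[OF that] finite_subset by blast
    then show "finite (Ts i)" by (rule finite_subset[OF _ iffD2[OF finite_Pow_iff], rotated]) (auto simp: Ts_def)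
    show "finite (Cs T)" using assms(1) by (rule finite_subset[OF _ iffD2[OF finite_Pow_iff], rotated]) (auto simp: Cs_def)
  qed
  have "{C. C \<subseteq> W \<and> card C = M \<and> (\<exists>i\<in>I. L \<le> card (C \<inter> B i))} \<subseteq> (\<Union>i\<in>I. \<Union>T\<in>Ts i. Cs T)"
  proof safe
    fix C i assume C: "C \<subseteq> W" "M = card C" and i: "i \<in> I" "L \<le> card (C \<inter> B i)"
    then obtain T where "T \<subseteq> C \<inter> B i" "card T = L"
      by (meson obtain_subset_with_card_n)
    then show "C \<in> (\<Union>i\<in>I. \<Union>T\<in>Ts i. Cs T)" using C i by (auto simp: Ts_def Cs_def)
  qed
  then have "card {C. C \<subseteq> W \<and> card C = M \<and> (\<exists>i\<in>I. L \<le> card (C \<inter> B i))} \<le> card (\<Union>i\<in>I. \<Union>T\<in>Ts i. Cs T)"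
    using assms(2) fin by (intro card_mono) auto
  also have "\<dots> \<le> (\<Sum>i\<in>I. \<Sum>T\<in>Ts i. card (Cs T))"
    using fin by (intro order.trans[OF card_UN_le[OF assms(2)]] sum_mono card_UN_le) auto
  finally have "real (card {C. C \<subseteq> W \<and> card C = M \<and> (\<exists>i\<in>I. L \<le> card (C \<inter> B i))})
      \<le> (\<Sum>i\<in>I. \<Sum>T\<in>Ts i. real (card (Cs T)))"
    by (simp flip: of_nat_sum)
  also have "\<dots> \<le> (\<Sum>i\<in>I. \<rho> ^ L * real (card W choose M))"
  proof (rule sum_mono)
    fix i assume i: "i \<in> I"
    have "(\<Sum>T\<in>Ts i. real (card (Cs T))) \<le> (real (card (B i)) * real M / real (card W)) ^ L * real (card W choose M)"
      using sum_card_subsets_containing_le[OF assms(1) assms(4)[OF i] assms(3)] by (simp add: Ts_def Cs_def)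
    also have "\<dots> \<le> \<rho> ^ L * real (card W choose M)"
      using assms(5)[OF i] by (intro mult_right_mono power_mono) simp_all
    finally show "(\<Sum>T\<in>Ts i. real (card (Cs T))) \<le> \<rho> ^ L * real (card W choose M)" .
  qed
  also have "\<dots> = real (card I) * \<rho> ^ L * real (card W choose M)"
    by simp
  finally show ?thesis .
qed

lemma card_words_up_to_le:
  assumes "q \<ge> 2"
  shows "real (card {r. set r \<subseteq> {0..<q} \<and> length r \<le> m}) \<le> real q ^ Suc m"
proof -
  have "real (card {r. set r \<subseteq> {0..<q} \<and> length r \<le> m}) = (\<Sum>i<Suc m. real q ^ i)"
    by (simp add: card_lists_length_le lessThan_Suc_atMost)
  also have "\<dots> = (real q ^ Suc m - 1) / (real q - 1)"
    by (rule geometric_sum) (use assms in simp)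
  also have "\<dots> \<le> real q ^ Suc m"
  proof -
    have "real q ^ Suc m \<le> real q ^ Suc m * (real q - 1)"
      using mult_left_mono[of 1 "real q - 1" "real q ^ Suc m"] assms by simp
    moreover have "0 < real q - 1" using assms by simp
    ultimately show ?thesis by (simp only: pos_divide_le_eq)
  qed
  finally show ?thesis .
qed

lemma prob_random_code_ge:
  assumes "random_codes q n R \<noteq> {}"
    and "real (card {C \<in> random_codes q n R. \<not> P C}) \<le> \<delta> * real (card (random_codes q n R))"
  shows "1 - \<delta> \<le> prob_random_code q n R P"
proof -
  let ?A = "random_codes q n R"
  have "finite ?A"
    using finite_words[of q n] unfolding random_codes_def
    by (rule finite_subset[OF _ iffD2[OF finite_Pow_iff], rotated]) auto
  then have "card ?A = card {C \<in> ?A. P C} + card {C \<in> ?A. \<not> P C}"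
    by (subst card_Un_disjoint[symmetric]) (auto intro: arg_cong[where f = card])
  moreover have pos: "0 < real (card ?A)"
    using assms(1) \<open>finite ?A\<close> by (simp add: card_gt_0_iff)
  ultimately have "prob_random_code q n R P = 1 - real (card {C \<in> ?A. \<not> P C}) / real (card ?A)"
    by (simp add: prob_random_code_def field_simps)
  moreover have "real (card {C \<in> ?A. \<not> P C}) / real (card ?A) \<le> \<delta>"
    using assms(2) pos by (simp add: pos_divide_le_eq)
  ultimately show ?thesis by simp
qed

lemma not_list_decodable_imp_heavy_ball:
  assumes "C \<subseteq> words q n" "\<not> list_decodable_insdel q n \<gamma> \<kappa> L C" "0 \<le> L"
  obtains r where "set r \<subseteq> {0..<q}" "length r \<le> n + nat \<lfloor>\<gamma> * real n\<rfloor>"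
    "nat \<lfloor>L\<rfloor> + 1 \<le> card (C \<inter> insdel_ball q n (nat \<lfloor>\<gamma> * real n\<rfloor>) (nat \<lfloor>\<kappa> * real n\<rfloor>) r)"
proof -
  define a where "a = nat \<lfloor>\<gamma> * real n\<rfloor>"
  define b where "b = nat \<lfloor>\<kappa> * real n\<rfloor>"
  obtain r where r: "set r \<subseteq> {0..<q}" "L < real (card {c \<in> C. insdel a b c r})"
    using assms(2) by (auto simp: list_decodable_insdel_def a_def b_def not_le)
  have ball: "{c \<in> C. insdel a b c r} = C \<inter> insdel_ball q n a b r"
    using assms(1) by (auto simp: insdel_ball_def)
  have "\<lfloor>L\<rfloor> < int (card {c \<in> C. insdel a b c r})"
    using r(2) by (simp add: floor_less_iff)
  then have L: "nat \<lfloor>L\<rfloor> + 1 \<le> card {c \<in> C. insdel a b c r}"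
    using assms(3) by (simp add: Suc_le_eq nat_less_iff)
  then have "{c \<in> C. insdel a b c r} \<noteq> {}"
    by (intro notI) simp
  then obtain c where c: "c \<in> C" "insdel a b c r"
    by blast
  then obtain s where "subseq s c" "length r \<le> length s + a"
    using insdel_imp_common_subseq by metis
  moreover have "length c = n" using c(1) assms(1) by (auto simp: words_def)
  ultimately have "length r \<le> n + a" using list_emb_length by fastforce
  then show ?thesis using that r(1) L ball by (simp add: a_def b_def)
qed

lemma code_size_le:
  assumes "q \<ge> 2"
  shows "real (nat \<lfloor>real q powr (insdel_rate q \<gamma> \<kappa> \<epsilon> * real n)\<rfloor>)
    \<le> real q ^ n * exp (- real n * (ins_exponent q \<gamma> \<kappa> + del_exponent q \<kappa> + \<epsilon> * ln q))"
proof -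
  have "real q powr (insdel_rate q \<gamma> \<kappa> \<epsilon> * real n) = exp (real n * (ln q * insdel_rate q \<gamma> \<kappa> \<epsilon>))"
    using assms by (simp add: powr_def mult_ac)
  also have "\<dots> = exp (real n * ln q) * exp (- real n * (ins_exponent q \<gamma> \<kappa> + del_exponent q \<kappa> + \<epsilon> * ln q))"
    by (simp add: ln_insdel_rate algebra_simps flip: exp_add)
  also have "exp (real n * ln q) = real q ^ n"
    using assms by (simp add: exp_of_nat_mult)
  finally show ?thesis by simp
qed

lemma code_size_le_card_words:
  assumes "q \<ge> 2" "0 \<le> \<gamma>" "0 \<le> \<kappa>" "\<kappa> < 1" "0 < \<epsilon>"
  shows "nat \<lfloor>real q powr (insdel_rate q \<gamma> \<kappa> \<epsilon> * real n)\<rfloor> \<le> card (words q n)"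
proof -
  have "0 \<le> ins_exponent q \<gamma> \<kappa> + del_exponent q \<kappa>"
    using ins_exponent_nonneg[OF assms(1,2,4)] del_exponent_nonneg[OF assms(1)] by simp
  have "real (nat \<lfloor>real q powr (insdel_rate q \<gamma> \<kappa> \<epsilon> * real n)\<rfloor>)
      \<le> real q ^ n * exp (- real n * (ins_exponent q \<gamma> \<kappa> + del_exponent q \<kappa> + \<epsilon> * ln q))"
    by (rule code_size_le[OF assms(1)])
  also have "\<dots> \<le> real q ^ n"
    using \<open>0 \<le> ins_exponent q \<gamma> \<kappa> + del_exponent q \<kappa>\<close> assms(1,5) by (simp add: mult_left_le)
  finally show ?thesis by (simp add: card_words flip: of_nat_power)
qed

lemma card_insdel_ball_mult_code_size_le:
  assumes "q \<ge> 2" "0 \<le> \<gamma>" "0 \<le> \<kappa>" "\<kappa> \<le> (real q - 1) / real q"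
    and "real a \<le> \<gamma> * real n" "real b \<le> \<kappa> * real n" "set r \<subseteq> {0..<q}"
    and "real n + 1 \<le> real q powr (\<epsilon> * real n / 2)"
  shows "real (card (insdel_ball q n a b r)) * real (nat \<lfloor>real q powr (insdel_rate q \<gamma> \<kappa> \<epsilon> * real n)\<rfloor>)
    / real q ^ n \<le> real q powr (- (\<epsilon> * real n / 2))"
proof -
  define E where "E = ins_exponent q \<gamma> \<kappa> + del_exponent q \<kappa>"
  define M where "M = real (nat \<lfloor>real q powr (insdel_rate q \<gamma> \<kappa> \<epsilon> * real n)\<rfloor>)"
  have "M \<le> real q ^ n * exp (- real n * (E + \<epsilon> * ln q))"
    using code_size_le[OF assms(1)] by (simp add: E_def M_def add.assoc)
  then have "M / real q ^ n \<le> exp (- real n * (E + \<epsilon> * ln q))"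
    using assms(1) by (simp add: pos_divide_le_eq mult.commute)
  moreover have "real (card (insdel_ball q n a b r)) \<le> (real n + 1) * exp (real n * E)"
    using card_insdel_ball_le[OF assms(1-7)] by (simp add: E_def)
  ultimately have "real (card (insdel_ball q n a b r)) * (M / real q ^ n)
      \<le> (real n + 1) * exp (real n * E) * exp (- real n * (E + \<epsilon> * ln q))"
    by (intro mult_mono) (simp_all add: M_def)
  also have "\<dots> = (real n + 1) * real q powr (- (\<epsilon> * real n))"
    using assms(1) by (simp add: powr_def algebra_simps flip: exp_add)
  also have "\<dots> \<le> real q powr (\<epsilon> * real n / 2) * real q powr (- (\<epsilon> * real n))"
    using assms(8) by (rule mult_right_mono) simp
  also have "\<dots> = real q powr (- (\<epsilon> * real n / 2))"
    by (simp flip: powr_add)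
  finally show ?thesis by (simp add: M_def)
qed

lemma card_words_up_to_mult_power_le:
  assumes "q \<ge> 2" "0 \<le> \<gamma>" "real a \<le> \<gamma> * real n" "2 * (\<gamma> + 3) \<le> \<epsilon> * real L" "1 \<le> n"
  shows "real (card {r. set r \<subseteq> {0..<q} \<and> length r \<le> n + a}) * (real q powr (- (\<epsilon> * real n / 2))) ^ L
    \<le> real q powr (- real n)"
proof -
  have q: "0 < real q" using assms(1) by simp
  have "real n * (2 * (\<gamma> + 3)) \<le> real n * (\<epsilon> * real L)"
    using assms(4) by (rule mult_left_mono) simp
  then have "real (Suc (n + a)) + real L * - (\<epsilon> * real n / 2) \<le> - real n"
    using assms(2,3,5) by (simp add: algebra_simps)
  then have "real q powr (real (Suc (n + a)) + real L * - (\<epsilon> * real n / 2)) \<le> real q powr (- real n)"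
    using assms(1) by (intro powr_mono) simp_all
  moreover have "real q powr (real (Suc (n + a)) + real L * - (\<epsilon> * real n / 2))
      = real q ^ Suc (n + a) * (real q powr (- (\<epsilon> * real n / 2))) ^ L"
    unfolding powr_add powr_realpow[OF q] powr_power[of "real q", OF q[THEN less_imp_neq, symmetric]] ..
  moreover have "real (card {r. set r \<subseteq> {0..<q} \<and> length r \<le> n + a}) * (real q powr (- (\<epsilon> * real n / 2))) ^ L
      \<le> real q ^ Suc (n + a) * (real q powr (- (\<epsilon> * real n / 2))) ^ L"
    using card_words_up_to_le[OF assms(1)] by (intro mult_right_mono) simp_all
  ultimately show ?thesis by simp
qed

lemma card_not_list_decodable_le:
  assumes q: "q \<ge> 2" and "0 \<le> \<gamma>" "0 \<le> \<kappa>" "\<kappa> \<le> (real q - 1) / real q" "0 < \<epsilon>" "0 \<le> Lr"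
    and "real n + 1 \<le> real q powr (\<epsilon> * real n / 2)"
  shows "real (card {C \<in> random_codes q n (insdel_rate q \<gamma> \<kappa> \<epsilon>). \<not> list_decodable_insdel q n \<gamma> \<kappa> Lr C})
    \<le> real (card {r. set r \<subseteq> {0..<q} \<and> length r \<le> n + nat \<lfloor>\<gamma> * real n\<rfloor>})
      * (real q powr (- (\<epsilon> * real n / 2))) ^ (nat \<lfloor>Lr\<rfloor> + 1)
      * real (card (random_codes q n (insdel_rate q \<gamma> \<kappa> \<epsilon>)))"
proof -
  define W where "W = words q n"
  define M where "M = nat \<lfloor>real q powr (insdel_rate q \<gamma> \<kappa> \<epsilon> * real n)\<rfloor>"
  define a where "a = nat \<lfloor>\<gamma> * real n\<rfloor>"
  define b where "b = nat \<lfloor>\<kappa> * real n\<rfloor>"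
  define Rs where "Rs = {r. set r \<subseteq> {0..<q} \<and> length r \<le> n + a}"
  define Heavy where
    "Heavy = {C. C \<subseteq> W \<and> card C = M \<and> (\<exists>r\<in>Rs. nat \<lfloor>Lr\<rfloor> + 1 \<le> card (C \<inter> insdel_ball q n a b r))}"
  have "(real q - 1) / real q < 1" using q by simp
  then have M: "M \<le> card W"
    using code_size_le_card_words[OF q assms(2,3) _ assms(5)] assms(4) by (simp add: M_def W_def)
  have ab: "a \<le> \<gamma> * real n" "b \<le> \<kappa> * real n"
    using assms(2,3) by (simp_all add: a_def b_def)
  have "{C \<in> random_codes q n (insdel_rate q \<gamma> \<kappa> \<epsilon>). \<not> list_decodable_insdel q n \<gamma> \<kappa> Lr C} \<subseteq> Heavy"
  proof
    fix C assume "C \<in> {C \<in> random_codes q n (insdel_rate q \<gamma> \<kappa> \<epsilon>). \<not> list_decodable_insdel q n \<gamma> \<kappa> Lr C}"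
    then have C: "C \<subseteq> W" "card C = M" "\<not> list_decodable_insdel q n \<gamma> \<kappa> Lr C"
      by (auto simp: random_codes_def W_def M_def)
    obtain r where "set r \<subseteq> {0..<q}" "length r \<le> n + a" "nat \<lfloor>Lr\<rfloor> + 1 \<le> card (C \<inter> insdel_ball q n a b r)"
      using not_list_decodable_imp_heavy_ball[OF C(1)[unfolded W_def] C(3) assms(6)] unfolding a_def b_def .
    then show "C \<in> Heavy" using C by (auto simp: Heavy_def Rs_def)
  qed
  moreover have "finite Heavy"
    using finite_words[of q n] unfolding Heavy_def W_def
    by (rule finite_subset[OF _ iffD2[OF finite_Pow_iff], rotated]) auto
  ultimately have "real (card {C \<in> random_codes q n (insdel_rate q \<gamma> \<kappa> \<epsilon>). \<not> list_decodable_insdel q n \<gamma> \<kappa> Lr C})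
      \<le> real (card Heavy)"
    by (simp add: card_mono)
  also have "\<dots> \<le> real (card Rs) * (real q powr (- (\<epsilon> * real n / 2))) ^ (nat \<lfloor>Lr\<rfloor> + 1) * real (card W choose M)"
    unfolding Heavy_def
  proof (rule card_subsets_meeting_some_le)
    show "finite W" "finite Rs" "M \<le> card W"
      using finite_words M by (simp_all add: W_def Rs_def finite_lists_length_le)
    show "insdel_ball q n a b r \<subseteq> W" for r by (auto simp: insdel_ball_def W_def)
    show "real (card (insdel_ball q n a b r)) * real M / real (card W) \<le> real q powr (- (\<epsilon> * real n / 2))"
      if "r \<in> Rs" for r
      using card_insdel_ball_mult_code_size_le[OF q assms(2-4) ab _ assms(7)] that
      by (simp add: W_def Rs_def M_def card_words)
  qed
  also have "card W choose M = card (random_codes q n (insdel_rate q \<gamma> \<kappa> \<epsilon>))"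
    by (simp add: random_codes_def W_def M_def n_subsets finite_words)
  finally show ?thesis by (simp add: Rs_def a_def)
qed

lemma prob_list_decodable_ge:
  fixes q n :: nat and \<gamma> \<kappa> \<epsilon> K :: real
  assumes q: "q \<ge> 2" and "0 \<le> \<gamma>" "0 \<le> \<kappa>" "\<kappa> \<le> (real q - 1) / real q"
    and "0 < \<epsilon>" "2 * (\<gamma> + 3) \<le> K" "1 \<le> n" "real n + 1 \<le> real q powr (\<epsilon> * real n / 2)"
  shows "1 - real q powr (- real n)
    \<le> prob_random_code q n (insdel_rate q \<gamma> \<kappa> \<epsilon>) (list_decodable_insdel q n \<gamma> \<kappa> (K / \<epsilon>))"
proof (rule prob_random_code_ge)
  define L where "L = nat \<lfloor>K / \<epsilon>\<rfloor> + 1"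
  have "0 \<le> K / \<epsilon>" using assms(2,5,6) by simp
  then have "real L = real_of_int \<lfloor>K / \<epsilon>\<rfloor> + 1" by (simp add: L_def)
  then have "K / \<epsilon> < real L" by (simp only: real_of_int_floor_add_one_gt)
  then have L: "2 * (\<gamma> + 3) \<le> \<epsilon> * real L" using assms(5,6) by (simp add: field_simps)
  have "real (card {C \<in> random_codes q n (insdel_rate q \<gamma> \<kappa> \<epsilon>). \<not> list_decodable_insdel q n \<gamma> \<kappa> (K / \<epsilon>) C})
      \<le> real (card {r. set r \<subseteq> {0..<q} \<and> length r \<le> n + nat \<lfloor>\<gamma> * real n\<rfloor>})
        * (real q powr (- (\<epsilon> * real n / 2))) ^ L * real (card (random_codes q n (insdel_rate q \<gamma> \<kappa> \<epsilon>)))"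
    using card_not_list_decodable_le[OF q assms(2-5) \<open>0 \<le> K / \<epsilon>\<close> assms(8)] by (simp add: L_def)
  also have "\<dots> \<le> real q powr (- real n) * real (card (random_codes q n (insdel_rate q \<gamma> \<kappa> \<epsilon>)))"
    using card_words_up_to_mult_power_le[OF q assms(2) _ L assms(7)] assms(2)
    by (intro mult_right_mono) simp_all
  finally show "real (card {C \<in> random_codes q n (insdel_rate q \<gamma> \<kappa> \<epsilon>). \<not> list_decodable_insdel q n \<gamma> \<kappa> (K / \<epsilon>) C})
      \<le> real q powr (- real n) * real (card (random_codes q n (insdel_rate q \<gamma> \<kappa> \<epsilon>)))" .
  have "(real q - 1) / real q < 1" using q by simp
  then have "nat \<lfloor>real q powr (insdel_rate q \<gamma> \<kappa> \<epsilon> * real n)\<rfloor> \<le> card (words q n)"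
    using code_size_le_card_words[OF q assms(2,3) _ assms(5)] assms(4) by simp
  then show "random_codes q n (insdel_rate q \<gamma> \<kappa> \<epsilon>) \<noteq> {}"
    using obtain_subset_with_card_n[of _ "words q n"] by (fastforce simp: random_codes_def)
qed

theorem mainTheorem2:
  fixes q :: nat and \<gamma> \<kappa> :: real
  assumes "q \<ge> 3"
    and "0 \<le> \<gamma>" and "\<gamma> < real q - 1"
    and "0 \<le> \<kappa>" and "\<kappa> < (real q - 1) / real q"
  shows "\<exists>K > 0. \<exists>\<epsilon>0 > 0. \<epsilon>0 \<le> 1 \<and>
           (\<forall>\<epsilon>. 0 < \<epsilon> \<and> \<epsilon> < \<epsilon>0 \<longrightarrow>
              (\<exists>N. \<forall>n \<ge> N.
                 prob_random_code q n (insdel_rate q \<gamma> \<kappa> \<epsilon>)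
                   (list_decodable_insdel q n \<gamma> \<kappa> (K / \<epsilon>))
                 \<ge> 1 - real q powr (- real n)))"
proof -
  have q: "q \<ge> 2" "1 < real q" using assms(1) by simp_all
  have "\<exists>N. \<forall>n \<ge> N. prob_random_code q n (insdel_rate q \<gamma> \<kappa> \<epsilon>)
      (list_decodable_insdel q n \<gamma> \<kappa> (2 * (\<gamma> + 3) / \<epsilon>)) \<ge> 1 - real q powr (- real n)"
    if \<epsilon>: "0 < \<epsilon>" for \<epsilon>
  proof -
    have "\<forall>\<^sub>F n in sequentially. real n + 1 \<le> real q powr (\<epsilon> * real n / 2)"
      using q(2) \<epsilon> by real_asymp
    then obtain N where "\<forall>n \<ge> N. real n + 1 \<le> real q powr (\<epsilon> * real n / 2)"
      by (auto simp: eventually_sequentially)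
    then show ?thesis
      using prob_list_decodable_ge[OF q(1) assms(2,4) less_imp_le[OF assms(5)] \<epsilon>]
      by (intro exI[of _ "max N 1"]) simp
  qed
  then show ?thesis
    using assms(2) by (intro exI[of _ "2 * (\<gamma> + 3)"] conjI exI[of _ 1]) auto
qed

end
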